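(* Let $a\neq 0$ be a real constant and consider the Hirota–Ramani equation $$u_t-u_{xxt}+a\,u_x(1-u_t)=0$$ for a scalar function $u(x,t)$. A vector field $\mathbf v=\xi(x,t,u)\partial_x+\eta(x,t,u)\partial_t+\varphi(x,t,u)\partial_u$ is an infinitesimal (classical, Lie point) symmetry of this equation if and only if $$\xi=-\tfrac{x}{3}c_1+c_3,\qquad \eta=c_1t+c_2,\qquad \varphi=\Big(\tfrac{2t}{3}+\tfrac{u}{3}-\tfrac{2x}{3a}\Big)c_1+c_4$$ for arbitrary constants $c_1,c_2,c_3,c_4$. Consequently the Lie algebra of infinitesimal point symmetries of the equation is spanned by $$\mathbf v_1=\partial_x,\quad \mathbf v_2=\partial_t,\quad \mathbf v_3=\tfrac1a\partial_u,\quad \mathbf v_4=3t\partial_t-x\partial_x+\Big(2t+u-\tfrac{2x}{a}\Big)\partial_u .$$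
   Context: A vector field $\mathbf v$ on the space of variables $(x,t,u)$ is an infinitesimal symmetry of the equation $\Delta=u_t-u_{xxt}+a u_x(1-u_t)=0$ if its third prolongation $\mathrm{Pr}^{(3)}\mathbf v$ satisfies $\mathrm{Pr}^{(3)}\mathbf v[\Delta]=0$ whenever $\Delta=0$, i.e. the local one-parameter group it generates maps solutions to solutions. *)

theory Defs
  imports "HOL-Analysis.Analysis"
begin

coinductive smooth :: "('a::euclidean_space \<Rightarrow> real) \<Rightarrow> bool" where
  "(\<forall>p. f differentiable (at p)) \<Longrightarrow>
   (\<forall>i\<in>Basis. smooth (\<lambda>p. frechet_derivative f (at p) i)) \<Longrightarrow> smooth f"

definition Dx :: "(real \<times> real \<Rightarrow> real) \<Rightarrow> real \<times> real \<Rightarrow> real" where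
  "Dx f = (\<lambda>p. frechet_derivative f (at p) (1, 0))"
definition Dt :: "(real \<times> real \<Rightarrow> real) \<Rightarrow> real \<times> real \<Rightarrow> real" where
  "Dt f = (\<lambda>p. frechet_derivative f (at p) (0, 1))"

definition HR :: "real \<Rightarrow> (real \<times> real \<Rightarrow> real) \<Rightarrow> real \<times> real \<Rightarrow> real" where
  "HR a u p = Dt u p - Dx (Dx (Dt u)) p + a * Dx u p * (1 - Dt u p)"

definition charQ :: "(real \<times> real \<times> real \<Rightarrow> real) \<Rightarrow> (real \<times> real \<times> real \<Rightarrow> real)
    \<Rightarrow> (real \<times> real \<times> real \<Rightarrow> real) \<Rightarrow> (real \<times> real \<Rightarrow> real) \<Rightarrow> real \<times> real \<Rightarrow> real" where
  "charQ \<xi> \<eta> \<phi> u = (\<lambda>(x, t). \<phi> (x, t, u (x, t)) - \<xi> (x, t, u (x, t)) * Dx u (x, t)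
                                - \<eta> (x, t, u (x, t)) * Dt u (x, t))"

text \<open>Prolongation coefficients phi^J = D_J Q + xi u_{J,x} + eta u_{J,t}, evaluated along
  the prolongation of u (total derivatives become partial derivatives of the composite).\<close>
definition phiX where
  "phiX \<xi> \<eta> \<phi> u = (\<lambda>(x, t). Dx (charQ \<xi> \<eta> \<phi> u) (x, t)
     + \<xi> (x, t, u (x, t)) * Dx (Dx u) (x, t) + \<eta> (x, t, u (x, t)) * Dt (Dx u) (x, t))"
definition phiT where
  "phiT \<xi> \<eta> \<phi> u = (\<lambda>(x, t). Dt (charQ \<xi> \<eta> \<phi> u) (x, t)
     + \<xi> (x, t, u (x, t)) * Dx (Dt u) (x, t) + \<eta> (x, t, u (x, t)) * Dt (Dt u) (x, t))"
definition phiXXT where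
  "phiXXT \<xi> \<eta> \<phi> u = (\<lambda>(x, t). Dx (Dx (Dt (charQ \<xi> \<eta> \<phi> u))) (x, t)
     + \<xi> (x, t, u (x, t)) * Dx (Dx (Dx (Dt u))) (x, t)
     + \<eta> (x, t, u (x, t)) * Dt (Dx (Dx (Dt u))) (x, t))"

text \<open>Delta = u_t - u_xxt + a u_x (1 - u_t) depends only on
  u_x, u_t, u_xxt, with dDelta/du_x = a (1 - u_t), dDelta/du_t = 1 - a u_x,
  dDelta/du_xxt = -1 (and no explicit x, t, u dependence).\<close>
definition prDelta where
  "prDelta a \<xi> \<eta> \<phi> u p =
     phiX \<xi> \<eta> \<phi> u p * (a * (1 - Dt u p)) + phiT \<xi> \<eta> \<phi> u p * (1 - a * Dx u p)
     - phiXXT \<xi> \<eta> \<phi> u p"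

text \<open>Infinitesimal symmetry: pr^(3) v [Delta] = 0 whenever Delta = 0.  Every point of the
  3-jet space is the 3-jet of some smooth u at some point, so it suffices (and is equivalent)
  to quantify over smooth u and points (x,t).\<close>
definition HR_symmetry where
  "HR_symmetry a \<xi> \<eta> \<phi> \<longleftrightarrow>
     (\<forall>u. smooth u \<longrightarrow> (\<forall>p. HR a u p = 0 \<longrightarrow> prDelta a \<xi> \<eta> \<phi> u p = 0))"

end

theory Submission
  imports Defs
begin

text \<open>Every 3-jet at a point is the jet of a cubic polynomial, and such a polynomial solves
  the equation at that point once its \<open>u\<^sub>x\<^sub>x\<^sub>t\<close>-coefficient equals
  \<open>u\<^sub>t + a u\<^sub>x (1 - u\<^sub>t)\<close>. Evaluating the symmetry condition on such polynomials, and
  comparing polynomials whose jets differ in one free coordinate, isolates the determining equations one by one: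
  \<open>\<xi>\<^sub>t = \<xi>\<^sub>u = \<eta>\<^sub>x = \<eta>\<^sub>u = 0\<close>, \<open>\<phi>\<^sub>t\<^sub>u = \<phi>\<^sub>u\<^sub>u = 0\<close>, \<open>2\<phi>\<^sub>x\<^sub>u = \<xi>\<^sub>x\<^sub>x\<close>,
  and then \<open>\<phi>\<^sub>u = -\<xi>\<^sub>x\<close>, \<open>\<phi>\<^sub>t = \<xi>\<^sub>x + \<eta>\<^sub>t\<close>, \<open>a\<phi>\<^sub>x = 2\<xi>\<^sub>x - \<phi>\<^sub>x\<^sub>x\<^sub>u\<close>,
  \<open>a\<phi>\<^sub>x + \<phi>\<^sub>t = \<phi>\<^sub>x\<^sub>x\<^sub>t\<close>. Together these force \<open>\<xi>\<^sub>x\<^sub>x = 0\<close>, so all first partials of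
  \<open>\<xi>, \<eta>, \<phi>\<close> are constant multiples of \<open>\<xi>\<^sub>x\<close>, and the three coefficients are affine of the
  stated shape. The expansions are only comparable because mixed partials of smooth functions
  commute (Schwarz's theorem, via the mean value theorem).\<close>

abbreviation dderiv :: "('a::euclidean_space \<Rightarrow> real) \<Rightarrow> 'a \<Rightarrow> 'a \<Rightarrow> real" where
  "dderiv f p v \<equiv> frechet_derivative f (at p) v"

lemma smooth_differentiable: "smooth f \<Longrightarrow> f differentiable (at p)"
  by (erule smooth.cases) auto

lemma smooth_dderiv: "smooth f \<Longrightarrow> i \<in> Basis \<Longrightarrow> smooth (\<lambda>p. dderiv f p i)"
  by (erule smooth.cases) auto

lemma has_derivative_dderiv: "f differentiable (at p) \<Longrightarrow> (f has_derivative dderiv f p) (at p)"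
  using frechet_derivative_works by blast

lemma Basis_real3:
  "((1::real), (0::real), (0::real)) \<in> Basis" "((0::real), (1::real), (0::real)) \<in> Basis"
  "((0::real), (0::real), (1::real)) \<in> Basis"
  by (auto simp: Basis_prod_def zero_prod_def)

lemma Basis_real2: "((1::real), (0::real)) \<in> Basis" "((0::real), (1::real)) \<in> Basis"
  by (auto simp: Basis_prod_def)

lemma linear_real3_eq:
  assumes "linear L"
  shows "L (a::real, b::real, c::real) = a * L (1, 0, 0) + b * L (0, 1, 0) + c * L (0, 0, 1)"
proof -
  have "(a, b, c) = a *\<^sub>R (1, 0, 0) + b *\<^sub>R (0, 1, 0) + c *\<^sub>R (0::real, 0::real, 1::real)"
    by simp
  then have "L (a, b, c) = L (a *\<^sub>R (1, 0, 0) + b *\<^sub>R (0, 1, 0) + c *\<^sub>R (0::real, 0::real, 1::real))"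
    by metis
  also have "\<dots> = a *\<^sub>R L (1, 0, 0) + b *\<^sub>R L (0, 1, 0) + c *\<^sub>R L (0, 0, 1)"
    by (simp only: linear_add[OF assms] linear_scale[OF assms])
  finally show ?thesis by simp
qed

lemma dderiv_add:
  assumes "f differentiable (at p)" "g differentiable (at p)"
  shows "(\<lambda>p. f p + g p) differentiable (at p)"
    and "dderiv (\<lambda>p. f p + g p) p v = dderiv f p v + dderiv g p v"
proof -
  have c: "((\<lambda>p. f p + g p) has_derivative (\<lambda>v. dderiv f p v + dderiv g p v)) (at p)"
    using assms by (intro has_derivative_add has_derivative_dderiv)
  then show "(\<lambda>p. f p + g p) differentiable (at p)" unfolding differentiable_def by blast
  show "dderiv (\<lambda>p. f p + g p) p v = dderiv f p v + dderiv g p v"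
    using fun_cong[OF frechet_derivative_at[OF c]] by simp
qed

lemma dderiv_mult:
  assumes "f differentiable (at p)" "g differentiable (at p)"
  shows "(\<lambda>p. f p * g p) differentiable (at p)"
    and "dderiv (\<lambda>p. f p * g p) p v = f p * dderiv g p v + dderiv f p v * g p"
proof -
  have c: "((\<lambda>p. f p * g p) has_derivative (\<lambda>v. f p * dderiv g p v + dderiv f p v * g p)) (at p)"
    using assms by (intro has_derivative_mult has_derivative_dderiv)
  then show "(\<lambda>p. f p * g p) differentiable (at p)" unfolding differentiable_def by blast
  show "dderiv (\<lambda>p. f p * g p) p v = f p * dderiv g p v + dderiv f p v * g p"
    using fun_cong[OF frechet_derivative_at[OF c]] by simp
qed

lemma dderiv_linear:
  assumes "bounded_linear f"
  shows "f differentiable (at p)" and "dderiv f p v = f v"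
proof -
  have c: "(f has_derivative f) (at p)" using assms by (rule bounded_linear_imp_has_derivative)
  then show "f differentiable (at p)" unfolding differentiable_def by blast
  show "dderiv f p v = f v" using fun_cong[OF frechet_derivative_at[OF c]] by simp
qed

lemma dderiv_compose3:
  fixes F :: "real \<times> real \<times> real \<Rightarrow> real"
  assumes "F differentiable (at (h1 p, h2 p, h3 p))" "h1 differentiable (at p)"
    "h2 differentiable (at p)" "h3 differentiable (at p)"
  shows "(\<lambda>p. F (h1 p, h2 p, h3 p)) differentiable (at p)"
    and "dderiv (\<lambda>p. F (h1 p, h2 p, h3 p)) p v =
       dderiv h1 p v * dderiv F (h1 p, h2 p, h3 p) (1, 0, 0)
     + dderiv h2 p v * dderiv F (h1 p, h2 p, h3 p) (0, 1, 0)
     + dderiv h3 p v * dderiv F (h1 p, h2 p, h3 p) (0, 0, 1)"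
proof -
  have "((\<lambda>p. (h1 p, h2 p, h3 p)) has_derivative
      (\<lambda>v. (dderiv h1 p v, dderiv h2 p v, dderiv h3 p v))) (at p)"
    using assms by (intro has_derivative_Pair has_derivative_dderiv)
  from has_derivative_compose[OF this has_derivative_dderiv[OF assms(1)]]
  have c: "((\<lambda>p. F (h1 p, h2 p, h3 p)) has_derivative
      (\<lambda>v. dderiv F (h1 p, h2 p, h3 p) (dderiv h1 p v, dderiv h2 p v, dderiv h3 p v))) (at p)"
    by simp
  then show "(\<lambda>p. F (h1 p, h2 p, h3 p)) differentiable (at p)"
    unfolding differentiable_def by blast
  have "dderiv (\<lambda>p. F (h1 p, h2 p, h3 p)) p v
      = dderiv F (h1 p, h2 p, h3 p) (dderiv h1 p v, dderiv h2 p v, dderiv h3 p v)"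
    using fun_cong[OF frechet_derivative_at[OF c]] by simp
  also have "\<dots> = dderiv h1 p v * dderiv F (h1 p, h2 p, h3 p) (1, 0, 0)
     + dderiv h2 p v * dderiv F (h1 p, h2 p, h3 p) (0, 1, 0)
     + dderiv h3 p v * dderiv F (h1 p, h2 p, h3 p) (0, 0, 1)"
    by (rule linear_real3_eq[OF linear_frechet_derivative[OF assms(1)]])
  finally show "dderiv (\<lambda>p. F (h1 p, h2 p, h3 p)) p v =
       dderiv h1 p v * dderiv F (h1 p, h2 p, h3 p) (1, 0, 0)
     + dderiv h2 p v * dderiv F (h1 p, h2 p, h3 p) (0, 1, 0)
     + dderiv h3 p v * dderiv F (h1 p, h2 p, h3 p) (0, 0, 1)" .
qed

section \<open>Closure properties of smooth functions\<close>

text \<open>Every member of this set is differentiable and its partials stay in the set, so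
  coinduction shows that the whole set consists of smooth functions.\<close>

inductive_set smooth_closure :: "('a::euclidean_space \<Rightarrow> real) set" where
  from_smooth: "smooth f \<Longrightarrow> f \<in> smooth_closure"
| const: "(\<lambda>p. c) \<in> smooth_closure"
| linear: "bounded_linear f \<Longrightarrow> f \<in> smooth_closure"
| add: "f \<in> smooth_closure \<Longrightarrow> g \<in> smooth_closure \<Longrightarrow> (\<lambda>p. f p + g p) \<in> smooth_closure"
| mult: "f \<in> smooth_closure \<Longrightarrow> g \<in> smooth_closure \<Longrightarrow> (\<lambda>p. f p * g p) \<in> smooth_closure"
| compose3: "smooth (F :: real \<times> real \<times> real \<Rightarrow> real) \<Longrightarrow> h1 \<in> smooth_closure
    \<Longrightarrow> h2 \<in> smooth_closure \<Longrightarrow> h3 \<in> smooth_closure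
    \<Longrightarrow> (\<lambda>p. F (h1 p, h2 p, h3 p)) \<in> smooth_closure"

lemma smooth_closure_dderiv:
  "f \<in> smooth_closure \<Longrightarrow>
    (\<forall>p. f differentiable (at p)) \<and> (\<forall>i\<in>Basis. (\<lambda>p. dderiv f p i) \<in> smooth_closure)"
proof (induction rule: smooth_closure.induct)
  case (from_smooth f)
  then show ?case
    by (auto intro: smooth_differentiable smooth_closure.from_smooth smooth_dderiv)
next
  case (const c)
  then show ?case by (auto intro: smooth_closure.const)
next
  case (linear f)
  then show ?case by (auto simp: dderiv_linear intro: smooth_closure.const)
next
  case (add f g)
  then show ?case by (auto simp: dderiv_add intro!: smooth_closure.add)
next
  case (mult f g)
  then show ?case by (auto simp: dderiv_mult intro!: smooth_closure.add smooth_closure.mult)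
next
  case (compose3 F h1 h2 h3)
  have "\<And>q. F differentiable (at q)" using compose3 by (blast intro: smooth_differentiable)
  moreover have "(\<lambda>p. dderiv F (h1 p, h2 p, h3 p) i) \<in> smooth_closure" if "i \<in> Basis" for i
    using smooth_closure.compose3[OF smooth_dderiv[OF compose3(1) that] compose3(2,3,4)] .
  ultimately show ?case
    using compose3 Basis_real3
    by (auto simp: dderiv_compose3 intro!: smooth_closure.add smooth_closure.mult)
qed

lemma smooth_closure_smooth: "f \<in> smooth_closure \<Longrightarrow> smooth f"
proof (coinduction arbitrary: f rule: smooth.coinduct)
  case (smooth f)
  then show ?case using smooth_closure_dderiv by blast
qed

lemma smooth_const [simp]: "smooth (\<lambda>p. c)"
  by (rule smooth_closure_smooth) (rule smooth_closure.const)

lemma smooth_add [simp]: "smooth f \<Longrightarrow> smooth g \<Longrightarrow> smooth (\<lambda>p. f p + g p)"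
  by (rule smooth_closure_smooth) (intro smooth_closure.add smooth_closure.from_smooth)

lemma smooth_mult [simp]: "smooth f \<Longrightarrow> smooth g \<Longrightarrow> smooth (\<lambda>p. f p * g p)"
  by (rule smooth_closure_smooth) (intro smooth_closure.mult smooth_closure.from_smooth)

lemma smooth_uminus [simp]: "smooth f \<Longrightarrow> smooth (\<lambda>p. - f p)"
  using smooth_mult[OF smooth_const[of "-1"]] by simp

lemma smooth_minus [simp]: "smooth f \<Longrightarrow> smooth g \<Longrightarrow> smooth (\<lambda>p. f p - g p)"
  using smooth_add[OF _ smooth_uminus] by simp

lemma smooth_divide_const [simp]: "smooth f \<Longrightarrow> smooth (\<lambda>p. f p / c)"
  using smooth_mult[OF _ smooth_const[of "1/c"]] by simp

lemma smooth_fst [simp]: "smooth (fst :: real \<times> real \<Rightarrow> real)"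
  by (rule smooth_closure_smooth) (intro smooth_closure.linear bounded_linear_fst)

lemma smooth_snd [simp]: "smooth (snd :: real \<times> real \<Rightarrow> real)"
  by (rule smooth_closure_smooth) (intro smooth_closure.linear bounded_linear_snd)

section \<open>Symmetry of mixed partial derivatives\<close>

lemma has_real_derivative_along_line:
  fixes F :: "'a::euclidean_space \<Rightarrow> real"
  assumes "F differentiable (at (x + s *\<^sub>R v))"
  shows "((\<lambda>s. F (x + s *\<^sub>R v)) has_real_derivative dderiv F (x + s *\<^sub>R v) v) (at s)"
proof -
  have "((\<lambda>s. x + s *\<^sub>R v) has_derivative (\<lambda>s. s *\<^sub>R v)) (at s)"
    by (auto intro!: derivative_eq_intros)
  from has_derivative_compose[OF this has_derivative_dderiv[OF assms]]
  have "((\<lambda>s. F (x + s *\<^sub>R v)) has_derivative (\<lambda>h. dderiv F (x + s *\<^sub>R v) (h *\<^sub>R v))) (at s)"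
    by simp
  moreover have "(\<lambda>h. dderiv F (x + s *\<^sub>R v) (h *\<^sub>R v)) = (*) (dderiv F (x + s *\<^sub>R v) v)"
    using linear_scale[OF linear_frechet_derivative[OF assms]] by (auto simp: mult.commute)
  ultimately show ?thesis unfolding has_field_derivative_def by simp
qed

lemma second_difference_mean_value:
  fixes F :: "'a::euclidean_space \<Rightarrow> real"
  assumes dF: "\<And>q. F differentiable (at q)"
    and dv: "\<And>q. (\<lambda>q. dderiv F q v) differentiable (at q)"
    and h: "h > 0"
  shows "\<exists>\<sigma> \<rho>. 0 < \<sigma> \<and> \<sigma> < h \<and> 0 < \<rho> \<and> \<rho> < h \<and>
     F (q0 + h *\<^sub>R v + h *\<^sub>R w) - F (q0 + h *\<^sub>R v) - F (q0 + h *\<^sub>R w) + F q0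
       = h * h * dderiv (\<lambda>q. dderiv F q v) (q0 + \<sigma> *\<^sub>R v + \<rho> *\<^sub>R w) w"
proof -
  define g where "g s = F ((q0 + h *\<^sub>R w) + s *\<^sub>R v) - F (q0 + s *\<^sub>R v)" for s
  have "\<And>s. (g has_real_derivative
      (dderiv F ((q0 + h *\<^sub>R w) + s *\<^sub>R v) v - dderiv F (q0 + s *\<^sub>R v) v)) (at s)"
    unfolding g_def by (intro DERIV_diff has_real_derivative_along_line dF)
  from MVT2[OF h this] obtain \<sigma> where \<sigma>: "0 < \<sigma>" "\<sigma> < h"
    and g_diff: "g h - g 0
      = (h - 0) * (dderiv F ((q0 + h *\<^sub>R w) + \<sigma> *\<^sub>R v) v - dderiv F (q0 + \<sigma> *\<^sub>R v) v)"
    by blast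
  define k where "k r = dderiv F ((q0 + \<sigma> *\<^sub>R v) + r *\<^sub>R w) v" for r
  have "\<And>r. (k has_real_derivative
      dderiv (\<lambda>q. dderiv F q v) ((q0 + \<sigma> *\<^sub>R v) + r *\<^sub>R w) w) (at r)"
    unfolding k_def using has_real_derivative_along_line[OF dv, of "q0 + \<sigma> *\<^sub>R v"] by blast
  from MVT2[OF h this] obtain \<rho> where \<rho>: "0 < \<rho>" "\<rho> < h"
    and k_diff: "k h - k 0 = (h - 0) * dderiv (\<lambda>q. dderiv F q v) ((q0 + \<sigma> *\<^sub>R v) + \<rho> *\<^sub>R w) w"
    by blast
  have "F (q0 + h *\<^sub>R v + h *\<^sub>R w) - F (q0 + h *\<^sub>R v) - F (q0 + h *\<^sub>R w) + F q0 = g h - g 0"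
    unfolding g_def by (simp add: algebra_simps)
  also have "\<dots> = h * (k h - k 0)" unfolding g_diff k_def by (simp add: algebra_simps)
  also have "\<dots> = h * h * dderiv (\<lambda>q. dderiv F q v) (q0 + \<sigma> *\<^sub>R v + \<rho> *\<^sub>R w) w"
    unfolding k_diff by simp
  finally show ?thesis using \<sigma> \<rho> by blast
qed

text \<open>The second difference is symmetric in \<open>v\<close> and \<open>w\<close>; dividing by \<open>h\<^sup>2\<close> it equals both
  mixed partials at points that tend to \<open>q0\<close> as \<open>h \<rightarrow> 0\<close>.\<close>

lemma dderiv_mixed_symmetric:
  fixes F :: "'a::euclidean_space \<Rightarrow> real"
  assumes dF: "\<And>q. F differentiable (at q)"
    and dv: "\<And>q. (\<lambda>q. dderiv F q v) differentiable (at q)"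
    and dw: "\<And>q. (\<lambda>q. dderiv F q w) differentiable (at q)"
    and cv: "\<And>q. continuous (at q) (\<lambda>q. dderiv (\<lambda>q. dderiv F q v) q w)"
    and cw: "\<And>q. continuous (at q) (\<lambda>q. dderiv (\<lambda>q. dderiv F q w) q v)"
  shows "dderiv (\<lambda>q. dderiv F q v) q0 w = dderiv (\<lambda>q. dderiv F q w) q0 v"
proof (rule ccontr)
  define A where "A q = dderiv (\<lambda>q. dderiv F q v) q w" for q
  define B where "B q = dderiv (\<lambda>q. dderiv F q w) q v" for q
  assume "dderiv (\<lambda>q. dderiv F q v) q0 w \<noteq> dderiv (\<lambda>q. dderiv F q w) q0 v"
  then have "\<bar>A q0 - B q0\<bar> > 0" unfolding A_def B_def by simp
  define e where "e = \<bar>A q0 - B q0\<bar> / 2"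
  have e: "e > 0" using \<open>\<bar>A q0 - B q0\<bar> > 0\<close> e_def by simp
  obtain d1 where d1: "d1 > 0" "\<And>y. dist y q0 < d1 \<Longrightarrow> dist (A y) (A q0) < e"
    using cv[of q0] e unfolding continuous_at_eps_delta A_def by blast
  obtain d2 where d2: "d2 > 0" "\<And>y. dist y q0 < d2 \<Longrightarrow> dist (B y) (B q0) < e"
    using cw[of q0] e unfolding continuous_at_eps_delta B_def by blast
  define h where "h = min d1 d2 / (2 * (norm v + norm w + 1))"
  have pos: "2 * (norm v + norm w + 1) > 0"
    using norm_ge_zero[of v] norm_ge_zero[of w] by (smt (verit))
  have h: "h > 0" using d1 d2 pos unfolding h_def by (intro divide_pos_pos) auto
  have hb: "h * (norm v + norm w) < min d1 d2"
  proof -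
    have "h * (norm v + norm w) \<le> h * (norm v + norm w + 1)" using h by simp
    also have "\<dots> = min d1 d2 / 2" unfolding h_def using pos by (simp add: divide_simps)
    also have "\<dots> < min d1 d2" using d1(1) d2(1) by (simp add: min_def)
    finally show ?thesis .
  qed
  have near: "dist (q0 + \<sigma> *\<^sub>R a + \<rho> *\<^sub>R b) q0 < min d1 d2"
    if "0 < \<sigma>" "\<sigma> < h" "0 < \<rho>" "\<rho> < h" "norm a + norm b = norm v + norm w"
    for \<sigma> \<rho> and a b :: 'a
  proof -
    have "dist (q0 + \<sigma> *\<^sub>R a + \<rho> *\<^sub>R b) q0 = norm (\<sigma> *\<^sub>R a + \<rho> *\<^sub>R b)"
      by (simp add: dist_norm)
    also have "\<dots> \<le> \<sigma> * norm a + \<rho> * norm b"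
      using that by (metis (no_types, lifting) abs_of_pos norm_scaleR norm_triangle_ineq)
    also have "\<dots> \<le> h * norm a + h * norm b"
      using that by (intro add_mono mult_right_mono) auto
    also have "\<dots> = h * (norm v + norm w)" using that(5) by (metis distrib_left)
    finally show ?thesis using hb by linarith
  qed
  obtain \<sigma> \<rho> where s1: "0 < \<sigma>" "\<sigma> < h" "0 < \<rho>" "\<rho> < h" and
    e1: "F (q0 + h *\<^sub>R v + h *\<^sub>R w) - F (q0 + h *\<^sub>R v) - F (q0 + h *\<^sub>R w) + F q0
       = h * h * A (q0 + \<sigma> *\<^sub>R v + \<rho> *\<^sub>R w)"
    using second_difference_mean_value[OF dF dv h] unfolding A_def by blast
  obtain \<sigma>' \<rho>' where s2: "0 < \<sigma>'" "\<sigma>' < h" "0 < \<rho>'" "\<rho>' < h" and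
    e2: "F (q0 + h *\<^sub>R w + h *\<^sub>R v) - F (q0 + h *\<^sub>R w) - F (q0 + h *\<^sub>R v) + F q0
       = h * h * B (q0 + \<sigma>' *\<^sub>R w + \<rho>' *\<^sub>R v)"
    using second_difference_mean_value[OF dF dw h] unfolding B_def by blast
  have "h * h * A (q0 + \<sigma> *\<^sub>R v + \<rho> *\<^sub>R w) = h * h * B (q0 + \<sigma>' *\<^sub>R w + \<rho>' *\<^sub>R v)"
    using e1 e2 by (simp add: algebra_simps)
  then have AB: "A (q0 + \<sigma> *\<^sub>R v + \<rho> *\<^sub>R w) = B (q0 + \<sigma>' *\<^sub>R w + \<rho>' *\<^sub>R v)" using h by simp
  have "dist (A (q0 + \<sigma> *\<^sub>R v + \<rho> *\<^sub>R w)) (A q0) < e"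
    using d1(2) near[OF s1, of v w] by simp
  moreover have "dist (B (q0 + \<sigma>' *\<^sub>R w + \<rho>' *\<^sub>R v)) (B q0) < e"
    using d2(2) near[OF s2, of w v] by simp
  ultimately have "\<bar>A q0 - B q0\<bar> < 2 * e" using AB by (simp add: dist_real_def)
  then show False unfolding e_def by simp
qed

lemma smooth_dderiv_commute:
  fixes F :: "'a::euclidean_space \<Rightarrow> real"
  assumes "smooth F" "i \<in> Basis" "j \<in> Basis"
  shows "(\<lambda>q. dderiv (\<lambda>q. dderiv F q i) q j) = (\<lambda>q. dderiv (\<lambda>q. dderiv F q j) q i)"
proof
  fix q0
  have si: "smooth (\<lambda>q. dderiv F q i)" and sj: "smooth (\<lambda>q. dderiv F q j)"
    using assms smooth_dderiv by auto
  have "smooth (\<lambda>q. dderiv (\<lambda>q. dderiv F q i) q j)" "smooth (\<lambda>q. dderiv (\<lambda>q. dderiv F q j) q i)"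
    using si sj assms smooth_dderiv by auto
  then show "dderiv (\<lambda>q. dderiv F q i) q0 j = dderiv (\<lambda>q. dderiv F q j) q0 i"
    by (intro dderiv_mixed_symmetric)
      (use assms si sj in \<open>auto intro: smooth_differentiable differentiable_imp_continuous_within\<close>)
qed

definition Px :: "(real \<times> real \<times> real \<Rightarrow> real) \<Rightarrow> real \<times> real \<times> real \<Rightarrow> real" where
  "Px F = (\<lambda>q. dderiv F q (1, 0, 0))"
definition Pt :: "(real \<times> real \<times> real \<Rightarrow> real) \<Rightarrow> real \<times> real \<times> real \<Rightarrow> real" where
  "Pt F = (\<lambda>q. dderiv F q (0, 1, 0))"
definition Pu :: "(real \<times> real \<times> real \<Rightarrow> real) \<Rightarrow> real \<times> real \<times> real \<Rightarrow> real" where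
  "Pu F = (\<lambda>q. dderiv F q (0, 0, 1))"

lemma smooth_Px [simp]: "smooth F \<Longrightarrow> smooth (Px F)"
  and smooth_Pt [simp]: "smooth F \<Longrightarrow> smooth (Pt F)"
  and smooth_Pu [simp]: "smooth F \<Longrightarrow> smooth (Pu F)"
  unfolding Px_def Pt_def Pu_def using smooth_dderiv Basis_real3 by auto

lemma smooth_Dx [simp]: "smooth f \<Longrightarrow> smooth (Dx f)"
  and smooth_Dt [simp]: "smooth f \<Longrightarrow> smooth (Dt f)"
  unfolding Dx_def Dt_def using smooth_dderiv Basis_real2 by auto

lemma Pt_Px: "smooth F \<Longrightarrow> Pt (Px F) = Px (Pt F)"
  and Pu_Px: "smooth F \<Longrightarrow> Pu (Px F) = Px (Pu F)"
  and Pu_Pt: "smooth F \<Longrightarrow> Pu (Pt F) = Pt (Pu F)"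
  unfolding Px_def Pt_def Pu_def using smooth_dderiv_commute Basis_real3 by metis+

lemma Dt_Dx: "smooth f \<Longrightarrow> Dt (Dx f) = Dx (Dt f)"
  unfolding Dx_def Dt_def using smooth_dderiv_commute Basis_real2 by metis

lemma P_const [simp]: "Px (\<lambda>q. c) = (\<lambda>q. 0)" "Pt (\<lambda>q. c) = (\<lambda>q. 0)" "Pu (\<lambda>q. c) = (\<lambda>q. 0)"
  unfolding Px_def Pt_def Pu_def by simp_all

lemma Px_uminus: "smooth F \<Longrightarrow> Px (\<lambda>q. - F q) = (\<lambda>q. - Px F q)"
  unfolding Px_def
  by (rule ext, rule frechet_derivative_at[THEN fun_cong, symmetric])
    (auto intro: has_derivative_minus has_derivative_dderiv smooth_differentiable)

lemma Px_add: "smooth F \<Longrightarrow> smooth G \<Longrightarrow> Px (\<lambda>q. F q + G q) = (\<lambda>q. Px F q + Px G q)"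
  unfolding Px_def by (rule ext) (simp add: dderiv_add smooth_differentiable)

lemma D_const [simp]: "Dx (\<lambda>q. c) = (\<lambda>q. 0)" "Dt (\<lambda>q. c) = (\<lambda>q. 0)"
  unfolding Dx_def Dt_def by simp_all

lemma D_fst [simp]: "Dx fst = (\<lambda>q. 1)" "Dt fst = (\<lambda>q. 0)"
  and D_snd [simp]: "Dx snd = (\<lambda>q. 0)" "Dt snd = (\<lambda>q. 1)"
  unfolding Dx_def Dt_def by (simp_all add: dderiv_linear bounded_linear_fst bounded_linear_snd)

lemma D_add [simp]:
  "smooth f \<Longrightarrow> smooth g \<Longrightarrow> Dx (\<lambda>p. f p + g p) = (\<lambda>p. Dx f p + Dx g p)"
  "smooth f \<Longrightarrow> smooth g \<Longrightarrow> Dt (\<lambda>p. f p + g p) = (\<lambda>p. Dt f p + Dt g p)"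
  unfolding Dx_def Dt_def by (simp_all add: dderiv_add smooth_differentiable)

lemma D_mult [simp]:
  "smooth f \<Longrightarrow> smooth g \<Longrightarrow> Dx (\<lambda>p. f p * g p) = (\<lambda>p. f p * Dx g p + Dx f p * g p)"
  "smooth f \<Longrightarrow> smooth g \<Longrightarrow> Dt (\<lambda>p. f p * g p) = (\<lambda>p. f p * Dt g p + Dt f p * g p)"
  unfolding Dx_def Dt_def by (simp_all add: dderiv_mult smooth_differentiable)

lemma D_uminus [simp]:
  "smooth f \<Longrightarrow> Dx (\<lambda>p. - f p) = (\<lambda>p. - Dx f p)"
  "smooth f \<Longrightarrow> Dt (\<lambda>p. - f p) = (\<lambda>p. - Dt f p)"
  using D_mult[OF smooth_const[of "-1"], of f] by simp_all

lemma D_diff [simp]: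
  "smooth f \<Longrightarrow> smooth g \<Longrightarrow> Dx (\<lambda>p. f p - g p) = (\<lambda>p. Dx f p - Dx g p)"
  "smooth f \<Longrightarrow> smooth g \<Longrightarrow> Dt (\<lambda>p. f p - g p) = (\<lambda>p. Dt f p - Dt g p)"
  using D_add[OF _ smooth_uminus, of f g] D_uminus[of g] by simp_all

lemma D_divide_const [simp]:
  "smooth f \<Longrightarrow> Dx (\<lambda>p. f p / c) = (\<lambda>p. Dx f p / c)"
  "smooth f \<Longrightarrow> Dt (\<lambda>p. f p / c) = (\<lambda>p. Dt f p / c)"
  using D_mult[OF _ smooth_const[of "1/c"], of f] by simp_all

text \<open>A named composition: \<open>\<lambda>p. F (h1 p, h2 p, h3 p)\<close> is not a higher-order pattern, so
  the chain rule below could not be used as a rewrite rule on it.\<close>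

definition compose3 :: "(real \<times> real \<times> real \<Rightarrow> real) \<Rightarrow> ('a::euclidean_space \<Rightarrow> real)
    \<Rightarrow> ('a \<Rightarrow> real) \<Rightarrow> ('a \<Rightarrow> real) \<Rightarrow> 'a \<Rightarrow> real" where
  "compose3 F h1 h2 h3 = (\<lambda>p. F (h1 p, h2 p, h3 p))"

lemma smooth_compose3 [simp]:
  "smooth F \<Longrightarrow> smooth h1 \<Longrightarrow> smooth h2 \<Longrightarrow> smooth h3 \<Longrightarrow> smooth (compose3 F h1 h2 h3)"
  unfolding compose3_def
  by (rule smooth_closure_smooth) (intro smooth_closure.compose3 smooth_closure.from_smooth)

lemma D_compose3 [simp]:
  "smooth F \<Longrightarrow> smooth h1 \<Longrightarrow> smooth h2 \<Longrightarrow> smooth h3 \<Longrightarrow>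
    Dx (compose3 F h1 h2 h3) = (\<lambda>p. Dx h1 p * compose3 (Px F) h1 h2 h3 p
      + Dx h2 p * compose3 (Pt F) h1 h2 h3 p + Dx h3 p * compose3 (Pu F) h1 h2 h3 p)"
  "smooth F \<Longrightarrow> smooth h1 \<Longrightarrow> smooth h2 \<Longrightarrow> smooth h3 \<Longrightarrow>
    Dt (compose3 F h1 h2 h3) = (\<lambda>p. Dt h1 p * compose3 (Px F) h1 h2 h3 p
      + Dt h2 p * compose3 (Pt F) h1 h2 h3 p + Dt h3 p * compose3 (Pu F) h1 h2 h3 p)"
  unfolding compose3_def Dx_def Dt_def Px_def Pt_def Pu_def
  by (simp_all add: dderiv_compose3 smooth_differentiable)

lemma affine_if_partials_const:
  fixes F :: "real \<times> real \<times> real \<Rightarrow> real"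
  assumes "smooth F" and "\<And>q. Px F q = \<alpha>" and "\<And>q. Pt F q = \<beta>" and "\<And>q. Pu F q = \<gamma>"
  shows "F (x, t, u) = F (0, 0, 0) + \<alpha> * x + \<beta> * t + \<gamma> * u"
proof -
  define H where "H q = F q - (\<alpha> * fst q + \<beta> * fst (snd q) + \<gamma> * snd (snd q))"
    for q :: "real \<times> real \<times> real"
  have "(H has_derivative (\<lambda>h. 0)) (at q within UNIV)" for q
  proof -
    have d: "F differentiable (at q)" using assms(1) by (rule smooth_differentiable)
    have "dderiv F q h = \<alpha> * fst h + \<beta> * fst (snd h) + \<gamma> * snd (snd h)" for h
      using linear_real3_eq[OF linear_frechet_derivative[OF d], of "fst h" "fst (snd h)" "snd (snd h)"]
        assms(2-4)
      unfolding Px_def Pt_def Pu_def by (simp add: mult.commute)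
    moreover have "(H has_derivative
        (\<lambda>h. dderiv F q h - (\<alpha> * fst h + \<beta> * fst (snd h) + \<gamma> * snd (snd h)))) (at q)"
      unfolding H_def
      by (intro has_derivative_diff has_derivative_dderiv[OF d]) (auto intro!: derivative_eq_intros)
    ultimately show ?thesis by simp
  qed
  then obtain c where "\<And>q. H q = c" using has_derivative_zero_constant[of UNIV H] by auto
  from this[of "(x, t, u)"] this[of "(0, 0, 0)"] show ?thesis unfolding H_def by simp
qed

section \<open>Sufficiency\<close>

lemma charQ_eq:
  "charQ \<xi> \<eta> \<phi> u = (\<lambda>p. compose3 \<phi> fst snd u p - compose3 \<xi> fst snd u p * Dx u p
     - compose3 \<eta> fst snd u p * Dt u p)"
  unfolding charQ_def compose3_def by (simp add: case_prod_unfold)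

lemma HR_symmetry_if_affine:
  assumes "a \<noteq> 0"
    and "\<forall>x t u. \<xi> (x, t, u) = - (x / 3) * c1 + c3 \<and> \<eta> (x, t, u) = c1 * t + c2 \<and>
        \<phi> (x, t, u) = (2 * t / 3 + u / 3 - 2 * x / (3 * a)) * c1 + c4"
  shows "HR_symmetry a \<xi> \<eta> \<phi>"
  unfolding HR_symmetry_def
proof (intro allI impI)
  fix u :: "real \<times> real \<Rightarrow> real" and p :: "real \<times> real"
  assume "smooth u"
  obtain x t where p: "p = (x, t)" by fastforce
  have \<xi>: "\<And>x t u. \<xi> (x, t, u) = - (x / 3) * c1 + c3"
    and \<eta>: "\<And>x t u. \<eta> (x, t, u) = c1 * t + c2"
    and \<phi>: "\<And>x t u. \<phi> (x, t, u) = (2 * t / 3 + u / 3 - 2 * x / (3 * a)) * c1 + c4"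
    using assms(2) by auto
  have Q: "charQ \<xi> \<eta> \<phi> u = (\<lambda>p. (2 * snd p / 3 + u p / 3 - 2 * fst p / (3 * a)) * c1 + c4
     - (- (fst p / 3) * c1 + c3) * Dx u p - (c1 * snd p + c2) * Dt u p)"
    unfolding charQ_def by (auto simp: case_prod_unfold \<xi> \<eta> \<phi>)
  show "prDelta a \<xi> \<eta> \<phi> u p = 0"
    unfolding prDelta_def phiX_def phiT_def phiXXT_def Q p using \<open>smooth u\<close> assms(1)
    by (simp add: Dt_Dx \<xi> \<eta> \<phi> field_simps)
qed

section \<open>Necessity\<close>

definition jet_poly :: "real \<Rightarrow> real \<Rightarrow> real \<Rightarrow> real \<Rightarrow> real \<Rightarrow> real \<Rightarrow> real \<Rightarrow> real \<Rightarrow> real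
    \<Rightarrow> real \<Rightarrow> real \<times> real \<Rightarrow> real" where
  "jet_poly x0 t0 u0 ux ut uxx uxt uxxx uxxt uxtt = (\<lambda>(x, t).
     u0 + ux * (x - x0) + ut * (t - t0) + uxx * (x - x0)^2 / 2 + uxt * (x - x0) * (t - t0)
     + uxxx * (x - x0)^3 / 6 + uxxt * (x - x0)^2 * (t - t0) / 2 + uxtt * (x - x0) * (t - t0)^2 / 2)"

lemma smooth_jet_poly: "smooth (jet_poly x0 t0 u0 ux ut uxx uxt uxxx uxxt uxtt)"
  unfolding jet_poly_def case_prod_unfold power2_eq_square power3_eq_cube by simp

lemma HR_jet_poly:
  "HR a (jet_poly x0 t0 u0 ux ut uxx uxt uxxx (ut + a * ux * (1 - ut)) uxtt) (x0, t0) = 0"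
  unfolding HR_def jet_poly_def case_prod_unfold power2_eq_square power3_eq_cube
  by (simp add: field_simps)

lemmas prDelta_expand =
  prDelta_def phiX_def phiT_def phiXXT_def charQ_eq jet_poly_def case_prod_unfold
  power2_eq_square power3_eq_cube

context
  fixes a :: real and \<xi> \<eta> \<phi> :: "real \<times> real \<times> real \<Rightarrow> real"
  assumes a_nonzero: "a \<noteq> 0"
    and smooth_coefficients [simp]: "smooth \<xi>" "smooth \<eta>" "smooth \<phi>"
    and symmetry: "HR_symmetry a \<xi> \<eta> \<phi>"
begin

lemma prDelta_jet_poly:
  "prDelta a \<xi> \<eta> \<phi> (jet_poly x0 t0 u0 ux ut uxx uxt uxxx (ut + a * ux * (1 - ut)) uxtt) (x0, t0) = 0"
  using symmetry unfolding HR_symmetry_def by (simp add: smooth_jet_poly HR_jet_poly)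

text \<open>The jet arguments of \<open>prDelta_jet_poly\<close> are, in order,
  \<open>x0 t0 u0 ux ut uxx uxt uxxx uxtt\<close>.\<close>

lemma Pt_xi [simp]: "Pt \<xi> = (\<lambda>_. 0)"
proof (rule ext, clarify)
  fix x t u
  show "Pt \<xi> (x, t, u) = 0"
    using prDelta_jet_poly[of x t u 0 0 0 0 1 0] prDelta_jet_poly[of x t u 0 0 0 0 0 0]
    unfolding prDelta_expand by (simp add: Pt_Px Pu_Px Pu_Pt) (simp add: compose3_def)
qed

lemma Pu_xi [simp]: "Pu \<xi> = (\<lambda>_. 0)"
proof (rule ext, clarify)
  fix x t u
  show "Pu \<xi> (x, t, u) = 0"
    using prDelta_jet_poly[of x t u 0 1 0 0 1 0] prDelta_jet_poly[of x t u 0 1 0 0 0 0]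
    unfolding prDelta_expand by (simp add: Pt_Px Pu_Px Pu_Pt) (simp add: compose3_def)
qed

lemma Px_eta [simp]: "Px \<eta> = (\<lambda>_. 0)"
proof (rule ext, clarify)
  fix x t u
  show "Px \<eta> (x, t, u) = 0"
    using prDelta_jet_poly[of x t u 0 0 0 0 0 1] prDelta_jet_poly[of x t u 0 0 0 0 0 0]
    unfolding prDelta_expand by (simp add: Pt_Px Pu_Px Pu_Pt) (simp add: compose3_def)
qed

lemma Pu_eta [simp]: "Pu \<eta> = (\<lambda>_. 0)"
proof (rule ext, clarify)
  fix x t u
  show "Pu \<eta> (x, t, u) = 0"
    using prDelta_jet_poly[of x t u 1 0 0 0 0 1] prDelta_jet_poly[of x t u 1 0 0 0 0 0]
    unfolding prDelta_expand by (simp add: Pt_Px Pu_Px Pu_Pt) (simp add: compose3_def)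
qed

lemma Px_Pt_eta [simp]: "Px (Pt \<eta>) = (\<lambda>_. 0)"
  using Pt_Px[of \<eta>] by simp

lemma Pt_Pu_phi [simp]: "Pt (Pu \<phi>) = (\<lambda>_. 0)"
proof (rule ext, clarify)
  fix x t u
  show "Pt (Pu \<phi>) (x, t, u) = 0"
    using prDelta_jet_poly[of x t u 0 0 1 0 0 0] prDelta_jet_poly[of x t u 0 0 0 0 0 0]
    unfolding prDelta_expand by (simp add: Pt_Px Pu_Px Pu_Pt) (simp add: compose3_def)
qed

lemma Pu_Pu_phi [simp]: "Pu (Pu \<phi>) = (\<lambda>_. 0)"
proof (rule ext, clarify)
  fix x t u
  show "Pu (Pu \<phi>) (x, t, u) = 0"
    using prDelta_jet_poly[of x t u 0 1 1 0 0 0] prDelta_jet_poly[of x t u 0 1 0 0 0 0]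
    unfolding prDelta_expand by (simp add: Pt_Px Pu_Px Pu_Pt) (simp add: compose3_def)
qed

lemma Px_Px_xi_eq: "Px (Px \<xi>) (x, t, u) = 2 * Px (Pu \<phi>) (x, t, u)"
  using prDelta_jet_poly[of x t u 0 0 0 1 0 0] prDelta_jet_poly[of x t u 0 0 0 0 0 0]
  unfolding prDelta_expand by (simp add: Pt_Px Pu_Px Pu_Pt) (simp add: compose3_def)

lemma first_order_relations:
  shows Pt_phi_eq: "Pt \<phi> (x, t, u) = Px \<xi> (x, t, u) + Pt \<eta> (x, t, u)"
    and Pu_phi_eq: "Pu \<phi> (x, t, u) = - Px \<xi> (x, t, u)"
    and Px_phi_eq: "a * Px \<phi> (x, t, u) = 2 * Px \<xi> (x, t, u) - Px (Px (Pu \<phi>)) (x, t, u)"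
    and Px_Pt_phi_eq: "a * Px \<phi> (x, t, u) + Pt \<phi> (x, t, u) = Px (Px (Pt \<phi>)) (x, t, u)"
proof -
  have E1: "Px \<phi> (x, t, u) * a + Pt \<phi> (x, t, u) = Px (Px (Pt \<phi>)) (x, t, u)"
    using prDelta_jet_poly[of x t u 0 0 0 0 0 0]
    unfolding prDelta_expand by (simp add: Pt_Px Pu_Px Pu_Pt) (simp add: compose3_def)
  have E2: "(Px \<phi> (x, t, u) + Pu \<phi> (x, t, u) - Px \<xi> (x, t, u)) * a + Pt \<phi> (x, t, u) * (1 - a)
      = Px (Px (Pt \<phi>)) (x, t, u) + (a * Pu \<phi> (x, t, u) - 2 * (a * Px \<xi> (x, t, u)))
        - Pt \<eta> (x, t, u) * a"
    using prDelta_jet_poly[of x t u 1 0 0 0 0 0]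
    unfolding prDelta_expand by (simp add: Pt_Px Pu_Px Pu_Pt) (simp add: compose3_def)
  have E3: "Pt \<phi> (x, t, u) + 2 * Px \<xi> (x, t, u)
      - Px (Px (Pu \<phi>)) (x, t, u) - Px (Px (Pt \<phi>)) (x, t, u) = 0"
    using prDelta_jet_poly[of x t u 0 1 0 0 0 0]
    unfolding prDelta_expand by (simp add: Pt_Px Pu_Px Pu_Pt) (simp add: compose3_def)
  have E4: "(Pt \<phi> (x, t, u) + Pu \<phi> (x, t, u) - Pt \<eta> (x, t, u)) * (1 - a)
      = Px (Px (Pt \<phi>)) (x, t, u) + Px (Px (Pu \<phi>)) (x, t, u) + Pu \<phi> (x, t, u)
        - 2 * Px \<xi> (x, t, u) - Pt \<eta> (x, t, u)"
    using prDelta_jet_poly[of x t u 1 1 0 0 0 0]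
    unfolding prDelta_expand by (simp add: Pt_Px Pu_Px Pu_Pt) (simp add: compose3_def algebra_simps)
  have "a * (Pt \<phi> (x, t, u) - Px \<xi> (x, t, u) - Pt \<eta> (x, t, u)) = 0"
    using E1 E2 by (simp add: algebra_simps)
  then show Pt: "Pt \<phi> (x, t, u) = Px \<xi> (x, t, u) + Pt \<eta> (x, t, u)"
    using a_nonzero by simp
  have "a * (Pu \<phi> (x, t, u) + Px \<xi> (x, t, u)) = 0"
    using E1 E3 E4 Pt by (simp add: algebra_simps)
  then show "Pu \<phi> (x, t, u) = - Px \<xi> (x, t, u)"
    using a_nonzero by simp
  show "a * Px \<phi> (x, t, u) = 2 * Px \<xi> (x, t, u) - Px (Px (Pu \<phi>)) (x, t, u)"
    using E1 E3 by (simp add: algebra_simps)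
  show "a * Px \<phi> (x, t, u) + Pt \<phi> (x, t, u) = Px (Px (Pt \<phi>)) (x, t, u)"
    using E1 by (simp add: mult.commute)
qed

lemma Px_Px_xi [simp]: "Px (Px \<xi>) = (\<lambda>_. 0)"
proof (rule ext, clarify)
  fix x t u
  have "Pu \<phi> = (\<lambda>q. - Px \<xi> q)"
    by (rule ext, clarify) (rule Pu_phi_eq)
  then have "Px (Pu \<phi>) (x, t, u) = - Px (Px \<xi>) (x, t, u)"
    by (simp add: Px_uminus)
  then show "Px (Px \<xi>) (x, t, u) = 0"
    using Px_Px_xi_eq[of x t u] by simp
qed

lemma Px_Pu_phi [simp]: "Px (Pu \<phi>) = (\<lambda>_. 0)"
proof (rule ext, clarify)
  fix x t u
  show "Px (Pu \<phi>) (x, t, u) = 0"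
    using Px_Px_xi_eq[of x t u] by simp
qed

lemma Px_Pt_phi [simp]: "Px (Pt \<phi>) = (\<lambda>_. 0)"
proof -
  have "Pt \<phi> = (\<lambda>q. Px \<xi> q + Pt \<eta> q)"
    by (rule ext, clarify) (rule Pt_phi_eq)
  then show ?thesis by (simp add: Px_add)
qed

lemma coefficients_affine:
  "\<exists>c1 c2 c3 c4. \<forall>x t u.
     \<xi> (x, t, u) = - (x / 3) * c1 + c3 \<and>
     \<eta> (x, t, u) = c1 * t + c2 \<and>
     \<phi> (x, t, u) = (2 * t / 3 + u / 3 - 2 * x / (3 * a)) * c1 + c4"
proof -
  define k where "k = Px \<xi> (0, 0, 0)"
  have Px_xi: "Px \<xi> q = k" for q
  proof -
    obtain x t u where q: "q = (x, t, u)" by (cases q)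
    have "Px \<xi> (x, t, u) = Px \<xi> (0, 0, 0) + 0 * x + 0 * t + 0 * u"
      by (rule affine_if_partials_const) (simp_all add: Pt_Px Pu_Px)
    then show ?thesis unfolding q k_def by simp
  qed
  have Px_phi: "Px \<phi> q = 2 * k / a" and Pt_phi: "Pt \<phi> q = - 2 * k" and
    Pu_phi: "Pu \<phi> q = - k" and Pt_eta: "Pt \<eta> q = - 3 * k" for q
  proof -
    obtain x t u where q: "q = (x, t, u)" by (cases q)
    have "a * Px \<phi> q = 2 * k" and "a * Px \<phi> q + Pt \<phi> q = 0"
      using Px_phi_eq[of x t u] Px_Pt_phi_eq[of x t u] Px_xi unfolding q by simp_all
    then show "Px \<phi> q = 2 * k / a" and "Pt \<phi> q = - 2 * k"
      using a_nonzero by (simp_all add: field_simps)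
    then show "Pt \<eta> q = - 3 * k"
      using Pt_phi_eq[of x t u] Px_xi unfolding q by simp
    show "Pu \<phi> q = - k" using Pu_phi_eq[of x t u] Px_xi unfolding q by simp
  qed
  have \<xi>: "\<xi> (x, t, u) = \<xi> (0, 0, 0) + k * x + 0 * t + 0 * u"
    and \<eta>: "\<eta> (x, t, u) = \<eta> (0, 0, 0) + 0 * x + (- 3 * k) * t + 0 * u"
    and \<phi>: "\<phi> (x, t, u) = \<phi> (0, 0, 0) + (2 * k / a) * x + (- 2 * k) * t + (- k) * u" for x t u
    by (rule affine_if_partials_const; simp add: Px_xi Px_phi Pt_phi Pu_phi Pt_eta)+
  show ?thesis
  proof (intro exI allI conjI)
    fix x t u
    show "\<xi> (x, t, u) = - (x / 3) * (- 3 * k) + \<xi> (0, 0, 0)"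
      using \<xi>[of x t u] by simp
    show "\<eta> (x, t, u) = (- 3 * k) * t + \<eta> (0, 0, 0)"
      using \<eta>[of x t u] by simp
    show "\<phi> (x, t, u) = (2 * t / 3 + u / 3 - 2 * x / (3 * a)) * (- 3 * k) + \<phi> (0, 0, 0)"
      using \<phi>[of x t u] a_nonzero by (simp add: field_simps)
  qed
qed

end

theorem mainTheorem1:
  fixes a :: real and \<xi> \<eta> \<phi> :: "real \<times> real \<times> real \<Rightarrow> real"
  assumes "a \<noteq> 0" and "smooth \<xi>" and "smooth \<eta>" and "smooth \<phi>"
  shows "HR_symmetry a \<xi> \<eta> \<phi> \<longleftrightarrow>
    (\<exists>c1 c2 c3 c4 :: real. \<forall>x t u.
        \<xi> (x, t, u) = - (x / 3) * c1 + c3 \<and>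
        \<eta> (x, t, u) = c1 * t + c2 \<and>
        \<phi> (x, t, u) = (2 * t / 3 + u / 3 - 2 * x / (3 * a)) * c1 + c4)"
  using coefficients_affine[OF assms] HR_symmetry_if_affine[OF assms(1)] by blast

end
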